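(* Let $\mathcal{C}$ be a category with finite coproducts. The semifree functor $(-)^{\mathrm{s}}:\mathbf{Mon}(\mathcal{C})\to\mathbf{Mon}(\mathcal{C})$ together with the transformations $\epsilon$ and $\delta$ defined, for a monad $(M,\eta,\mu)$ and object $X$, by $\epsilon_{M,X}=[\eta_X,\mathrm{id}_{MX}]:X+MX\to MX$ and $\delta_{M,X}=\mathrm{id}_X+\mathrm{inr}^{X+MX}:X+MX\to X+(X+MX)$, is a comonad on $\mathbf{Mon}(\mathcal{C})$.
   Context: $\mathbf{Mon}(\mathcal{C})$ is the category of monads on $\mathcal{C}$ and monad morphisms. For a monad $(M,\eta,\mu)$, the semifree monad is $M^{\mathrm{s}}=\mathrm{Id}+M$ with unit $\eta^{\mathrm{s}}=\mathrm{inl}$ and multiplication $\mu^{\mathrm{s}}=[\mathrm{id}_{\mathrm{Id}+M},\ \mathrm{inr}\circ\mu\circ M[\eta,\mathrm{id}_M]]$; on a monad morphism $\sigma:M\Rightarrow T$, $(\sigma^{\mathrm{s}})_X=\mathrm{id}_X+\sigma_X$. Note $(M^{\mathrm{s}})^{\mathrm{s}}X=X+(X+MX)$. *)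

theory Defs
  imports Main
begin

text \<open>A category with chosen binary coproducts. Objects have type 'o, arrows type 'a;
  the carriers are the sets Ob and Ar. cmp C g f is the composite g after f.\<close>

record ('o,'a) cocat =
  Ob :: "'o set"
  Ar :: "'a set"
  dom :: "'a \<Rightarrow> 'o"
  cod :: "'a \<Rightarrow> 'o"
  cmp :: "'a \<Rightarrow> 'a \<Rightarrow> 'a"
  idt :: "'o \<Rightarrow> 'a"
  cp :: "'o \<Rightarrow> 'o \<Rightarrow> 'o"
  inl :: "'o \<Rightarrow> 'o \<Rightarrow> 'a"
  inr :: "'o \<Rightarrow> 'o \<Rightarrow> 'a"
  copair :: "'a \<Rightarrow> 'a \<Rightarrow> 'a"

definition hom :: "('o,'a) cocat \<Rightarrow> 'o \<Rightarrow> 'o \<Rightarrow> 'a set" where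
  "hom C X Y = {f \<in> Ar C. dom C f = X \<and> cod C f = Y}"

definition category :: "('o,'a) cocat \<Rightarrow> bool" where
  "category C \<longleftrightarrow>
     (\<forall>f\<in>Ar C. dom C f \<in> Ob C \<and> cod C f \<in> Ob C) \<and>
     (\<forall>X\<in>Ob C. idt C X \<in> hom C X X) \<and>
     (\<forall>f\<in>Ar C. \<forall>g\<in>Ar C. cod C f = dom C g \<longrightarrow> cmp C g f \<in> hom C (dom C f) (cod C g)) \<and>
     (\<forall>f\<in>Ar C. cmp C (idt C (cod C f)) f = f \<and> cmp C f (idt C (dom C f)) = f) \<and>
     (\<forall>f\<in>Ar C. \<forall>g\<in>Ar C. \<forall>h\<in>Ar C. cod C f = dom C g \<longrightarrow> cod C g = dom C h \<longrightarrow>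
        cmp C h (cmp C g f) = cmp C (cmp C h g) f)"

definition has_finite_coproducts :: "('o,'a) cocat \<Rightarrow> bool" where
  "has_finite_coproducts C \<longleftrightarrow>
     (\<exists>I\<in>Ob C. \<forall>Z\<in>Ob C. \<exists>!h. h \<in> hom C I Z) \<and>
     (\<forall>X\<in>Ob C. \<forall>Y\<in>Ob C.
        cp C X Y \<in> Ob C \<and> inl C X Y \<in> hom C X (cp C X Y) \<and> inr C X Y \<in> hom C Y (cp C X Y) \<and>
        (\<forall>Z\<in>Ob C. \<forall>f\<in>hom C X Z. \<forall>g\<in>hom C Y Z.
           copair C f g \<in> hom C (cp C X Y) Z \<and>
           cmp C (copair C f g) (inl C X Y) = f \<and> cmp C (copair C f g) (inr C X Y) = g \<and>
           (\<forall>h\<in>hom C (cp C X Y) Z. cmp C h (inl C X Y) = f \<and> cmp C h (inr C X Y) = g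
               \<longrightarrow> h = copair C f g)))"

definition asum :: "('o,'a) cocat \<Rightarrow> 'a \<Rightarrow> 'a \<Rightarrow> 'a" where
  "asum C f g = copair C (cmp C (inl C (cod C f) (cod C g)) f) (cmp C (inr C (cod C f) (cod C g)) g)"

definition endofunctor :: "('o,'a) cocat \<Rightarrow> ('o \<Rightarrow> 'o) \<Rightarrow> ('a \<Rightarrow> 'a) \<Rightarrow> bool" where
  "endofunctor C Fo Fa \<longleftrightarrow>
     (\<forall>X\<in>Ob C. Fo X \<in> Ob C) \<and>
     (\<forall>f\<in>Ar C. Fa f \<in> hom C (Fo (dom C f)) (Fo (cod C f))) \<and>
     (\<forall>X\<in>Ob C. Fa (idt C X) = idt C (Fo X)) \<and>
     (\<forall>f\<in>Ar C. \<forall>g\<in>Ar C. cod C f = dom C g \<longrightarrow> Fa (cmp C g f) = cmp C (Fa g) (Fa f))"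

definition nat_trans :: "('o,'a) cocat \<Rightarrow> ('o \<Rightarrow> 'o) \<Rightarrow> ('a \<Rightarrow> 'a) \<Rightarrow> ('o \<Rightarrow> 'o) \<Rightarrow> ('a \<Rightarrow> 'a)
    \<Rightarrow> ('o \<Rightarrow> 'a) \<Rightarrow> bool" where
  "nat_trans C Fo Fa Go Ga \<alpha> \<longleftrightarrow>
     (\<forall>X\<in>Ob C. \<alpha> X \<in> hom C (Fo X) (Go X)) \<and>
     (\<forall>f\<in>Ar C. cmp C (\<alpha> (cod C f)) (Fa f) = cmp C (Ga f) (\<alpha> (dom C f)))"

record ('o,'a) mnd =
  Mo :: "'o \<Rightarrow> 'o"
  Ma :: "'a \<Rightarrow> 'a"
  unit :: "'o \<Rightarrow> 'a"
  mult :: "'o \<Rightarrow> 'a"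

definition is_monad :: "('o,'a) cocat \<Rightarrow> ('o,'a) mnd \<Rightarrow> bool" where
  "is_monad C M \<longleftrightarrow>
     endofunctor C (Mo M) (Ma M) \<and>
     nat_trans C id id (Mo M) (Ma M) (unit M) \<and>
     nat_trans C (Mo M \<circ> Mo M) (Ma M \<circ> Ma M) (Mo M) (Ma M) (mult M) \<and>
     (\<forall>X\<in>Ob C. cmp C (mult M X) (unit M (Mo M X)) = idt C (Mo M X)) \<and>
     (\<forall>X\<in>Ob C. cmp C (mult M X) (Ma M (unit M X)) = idt C (Mo M X)) \<and>
     (\<forall>X\<in>Ob C. cmp C (mult M X) (mult M (Mo M X)) = cmp C (mult M X) (Ma M (mult M X)))"

definition monad_mor :: "('o,'a) cocat \<Rightarrow> ('o,'a) mnd \<Rightarrow> ('o,'a) mnd \<Rightarrow> ('o \<Rightarrow> 'a) \<Rightarrow> bool" where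
  "monad_mor C M T \<sigma> \<longleftrightarrow>
     nat_trans C (Mo M) (Ma M) (Mo T) (Ma T) \<sigma> \<and>
     (\<forall>X\<in>Ob C. cmp C (\<sigma> X) (unit M X) = unit T X) \<and>
     (\<forall>X\<in>Ob C. cmp C (\<sigma> X) (mult M X) =
                 cmp C (mult T X) (cmp C (Ma T (\<sigma> X)) (\<sigma> (Mo M X))))"

definition mon_id :: "('o,'a) cocat \<Rightarrow> ('o,'a) mnd \<Rightarrow> 'o \<Rightarrow> 'a" where
  "mon_id C M = (\<lambda>X. idt C (Mo M X))"

definition mon_comp :: "('o,'a) cocat \<Rightarrow> ('o \<Rightarrow> 'a) \<Rightarrow> ('o \<Rightarrow> 'a) \<Rightarrow> 'o \<Rightarrow> 'a" where
  "mon_comp C \<tau> \<sigma> = (\<lambda>X. cmp C (\<tau> X) (\<sigma> X))"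

definition mor_eq :: "('o,'a) cocat \<Rightarrow> ('o \<Rightarrow> 'a) \<Rightarrow> ('o \<Rightarrow> 'a) \<Rightarrow> bool" where
  "mor_eq C \<sigma> \<tau> \<longleftrightarrow> (\<forall>X\<in>Ob C. \<sigma> X = \<tau> X)"

definition mon_endofunctor :: "('o,'a) cocat \<Rightarrow> (('o,'a) mnd \<Rightarrow> ('o,'a) mnd)
    \<Rightarrow> (('o \<Rightarrow> 'a) \<Rightarrow> ('o \<Rightarrow> 'a)) \<Rightarrow> bool" where
  "mon_endofunctor C F Fm \<longleftrightarrow>
     (\<forall>M. is_monad C M \<longrightarrow> is_monad C (F M)) \<and>
     (\<forall>M T \<sigma>. is_monad C M \<longrightarrow> is_monad C T \<longrightarrow> monad_mor C M T \<sigma> \<longrightarrow>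
        monad_mor C (F M) (F T) (Fm \<sigma>)) \<and>
     (\<forall>M. is_monad C M \<longrightarrow> mor_eq C (Fm (mon_id C M)) (mon_id C (F M))) \<and>
     (\<forall>M T U \<sigma> \<tau>. is_monad C M \<longrightarrow> is_monad C T \<longrightarrow> is_monad C U \<longrightarrow>
        monad_mor C M T \<sigma> \<longrightarrow> monad_mor C T U \<tau> \<longrightarrow>
        mor_eq C (Fm (mon_comp C \<tau> \<sigma>)) (mon_comp C (Fm \<tau>) (Fm \<sigma>)))"

definition mon_comonad :: "('o,'a) cocat \<Rightarrow> (('o,'a) mnd \<Rightarrow> ('o,'a) mnd)
    \<Rightarrow> (('o \<Rightarrow> 'a) \<Rightarrow> ('o \<Rightarrow> 'a)) \<Rightarrow> (('o,'a) mnd \<Rightarrow> 'o \<Rightarrow> 'a) \<Rightarrow> (('o,'a) mnd \<Rightarrow> 'o \<Rightarrow> 'a) \<Rightarrow> bool" where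
  "mon_comonad C F Fm \<epsilon> \<delta> \<longleftrightarrow>
     mon_endofunctor C F Fm \<and>
     (\<forall>M. is_monad C M \<longrightarrow> monad_mor C (F M) M (\<epsilon> M) \<and> monad_mor C (F M) (F (F M)) (\<delta> M)) \<and>
     (\<forall>M T \<sigma>. is_monad C M \<longrightarrow> is_monad C T \<longrightarrow> monad_mor C M T \<sigma> \<longrightarrow>
        mor_eq C (mon_comp C \<sigma> (\<epsilon> M)) (mon_comp C (\<epsilon> T) (Fm \<sigma>)) \<and>
        mor_eq C (mon_comp C (Fm (Fm \<sigma>)) (\<delta> M)) (mon_comp C (\<delta> T) (Fm \<sigma>))) \<and>
     (\<forall>M. is_monad C M \<longrightarrow>
        mor_eq C (mon_comp C (\<epsilon> (F M)) (\<delta> M)) (mon_id C (F M)) \<and>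
        mor_eq C (mon_comp C (Fm (\<epsilon> M)) (\<delta> M)) (mon_id C (F M)) \<and>
        mor_eq C (mon_comp C (\<delta> (F M)) (\<delta> M)) (mon_comp C (Fm (\<delta> M)) (\<delta> M)))"

definition semifree :: "('o,'a) cocat \<Rightarrow> ('o,'a) mnd \<Rightarrow> ('o,'a) mnd" where
  "semifree C M =
     \<lparr> Mo = (\<lambda>X. cp C X (Mo M X)),
       Ma = (\<lambda>f. asum C f (Ma M f)),
       unit = (\<lambda>X. inl C X (Mo M X)),
       mult = (\<lambda>X. copair C (idt C (cp C X (Mo M X)))
                  (cmp C (inr C X (Mo M X))
                     (cmp C (mult M X) (Ma M (copair C (unit M X) (idt C (Mo M X))))))) \<rparr>"

definition semifree_mor :: "('o,'a) cocat \<Rightarrow> ('o \<Rightarrow> 'a) \<Rightarrow> 'o \<Rightarrow> 'a" where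
  "semifree_mor C \<sigma> = (\<lambda>X. asum C (idt C X) (\<sigma> X))"

definition sf_eps :: "('o,'a) cocat \<Rightarrow> ('o,'a) mnd \<Rightarrow> 'o \<Rightarrow> 'a" where
  "sf_eps C M = (\<lambda>X. copair C (unit M X) (idt C (Mo M X)))"

definition sf_delta :: "('o,'a) cocat \<Rightarrow> ('o,'a) mnd \<Rightarrow> 'o \<Rightarrow> 'a" where
  "sf_delta C M = (\<lambda>X. asum C (idt C X) (inr C X (Mo M X)))"

end

theory Submission
  imports Defs
begin

(*
  All arrows in sight (the components of \<mu>\<^sup>s, \<epsilon>, \<delta> and \<sigma>\<^sup>s) are arrows out of binary
  coproducts, so every equation demanded of a monad, a monad morphism or a comonad can be checked
  after precomposing with the two injections, where it reduces to the monad laws of M and the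
  naturality of its structure maps. The one step that needs an idea is associativity of
  \<mu>\<^sup>s = [id, inr \<circ> \<mu> \<circ> M\<epsilon>]: on the summand M(M\<^sup>s X) it follows from the multiplicativity
  \<epsilon> \<circ> \<mu>\<^sup>s = \<mu> \<circ> M\<epsilon> \<circ> \<epsilon> of the counit, together with associativity and naturality of \<mu>.
  In the same way, on that summand, multiplicativity of \<delta> reduces to the counit law
  \<epsilon> \<circ> \<delta> = id, and multiplicativity of \<sigma>\<^sup>s to the naturality of \<epsilon> in \<sigma>.
*)

locale cat =
  fixes C :: "('o,'a) cocat"
  assumes category: "category C"
begin

lemma dom_Ob [simp]: "f \<in> Ar C \<Longrightarrow> dom C f \<in> Ob C"
  and cod_Ob [simp]: "f \<in> Ar C \<Longrightarrow> cod C f \<in> Ob C"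
  using category unfolding category_def by auto

lemma idt_Ar [simp]: "X \<in> Ob C \<Longrightarrow> idt C X \<in> Ar C"
  and dom_idt [simp]: "X \<in> Ob C \<Longrightarrow> dom C (idt C X) = X"
  and cod_idt [simp]: "X \<in> Ob C \<Longrightarrow> cod C (idt C X) = X"
  using category unfolding category_def hom_def by auto

lemma cmp_Ar [simp]: "\<lbrakk>f \<in> Ar C; g \<in> Ar C; cod C f = dom C g\<rbrakk> \<Longrightarrow> cmp C g f \<in> Ar C"
  and dom_cmp [simp]: "\<lbrakk>f \<in> Ar C; g \<in> Ar C; cod C f = dom C g\<rbrakk> \<Longrightarrow> dom C (cmp C g f) = dom C f"
  and cod_cmp [simp]: "\<lbrakk>f \<in> Ar C; g \<in> Ar C; cod C f = dom C g\<rbrakk> \<Longrightarrow> cod C (cmp C g f) = cod C g"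
  using category unfolding category_def hom_def by auto

lemma cmp_idt_left [simp]: "\<lbrakk>f \<in> Ar C; cod C f = Y\<rbrakk> \<Longrightarrow> cmp C (idt C Y) f = f"
  and cmp_idt_right [simp]: "\<lbrakk>f \<in> Ar C; dom C f = X\<rbrakk> \<Longrightarrow> cmp C f (idt C X) = f"
  using category unfolding category_def by auto

text \<open>Oriented to the right, so that simp normalises composites to right-nested form;
  equations whose left side is a composite then also need a variant with a trailing arrow
  (the lemmas named \<open>*_cmp\<close> below).\<close>

lemma cmp_assoc [simp]:
  "\<lbrakk>f \<in> Ar C; g \<in> Ar C; h \<in> Ar C; cod C f = dom C g; cod C g = dom C h\<rbrakk>
   \<Longrightarrow> cmp C (cmp C h g) f = cmp C h (cmp C g f)"
  using category unfolding category_def by metis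

lemma cmp_extend:
  "\<lbrakk>cmp C a b = c; a \<in> Ar C; b \<in> Ar C; k \<in> Ar C; cod C b = dom C a; cod C k = dom C b\<rbrakk>
   \<Longrightarrow> cmp C a (cmp C b k) = cmp C c k"
  by (metis cmp_assoc)

lemma cmp_eq_cmp_extend:
  "\<lbrakk>cmp C a b = cmp C c d; a \<in> Ar C; b \<in> Ar C; c \<in> Ar C; d \<in> Ar C; k \<in> Ar C;
    cod C b = dom C a; cod C d = dom C c; cod C k = dom C b; dom C d = dom C b\<rbrakk>
   \<Longrightarrow> cmp C a (cmp C b k) = cmp C c (cmp C d k)"
  by (metis cmp_assoc)

context
  fixes M :: "('o,'a) mnd"
  assumes M [simp]: "is_monad C M"
begin

lemma Mo_Ob [simp]: "X \<in> Ob C \<Longrightarrow> Mo M X \<in> Ob C"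
  and Ma_Ar [simp]: "f \<in> Ar C \<Longrightarrow> Ma M f \<in> Ar C"
  and dom_Ma [simp]: "f \<in> Ar C \<Longrightarrow> dom C (Ma M f) = Mo M (dom C f)"
  and cod_Ma [simp]: "f \<in> Ar C \<Longrightarrow> cod C (Ma M f) = Mo M (cod C f)"
  and Ma_idt [simp]: "X \<in> Ob C \<Longrightarrow> Ma M (idt C X) = idt C (Mo M X)"
  and Ma_cmp [simp]:
    "\<lbrakk>f \<in> Ar C; g \<in> Ar C; cod C f = dom C g\<rbrakk> \<Longrightarrow> Ma M (cmp C g f) = cmp C (Ma M g) (Ma M f)"
  using M unfolding is_monad_def endofunctor_def hom_def by auto

lemma unit_Ar [simp]: "X \<in> Ob C \<Longrightarrow> unit M X \<in> Ar C"
  and dom_unit [simp]: "X \<in> Ob C \<Longrightarrow> dom C (unit M X) = X"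
  and cod_unit [simp]: "X \<in> Ob C \<Longrightarrow> cod C (unit M X) = Mo M X"
  and mult_Ar [simp]: "X \<in> Ob C \<Longrightarrow> mult M X \<in> Ar C"
  and dom_mult [simp]: "X \<in> Ob C \<Longrightarrow> dom C (mult M X) = Mo M (Mo M X)"
  and cod_mult [simp]: "X \<in> Ob C \<Longrightarrow> cod C (mult M X) = Mo M X"
  using M unfolding is_monad_def nat_trans_def hom_def by auto

lemma mult_unit [simp]: "X \<in> Ob C \<Longrightarrow> cmp C (mult M X) (unit M (Mo M X)) = idt C (Mo M X)"
  and mult_Ma_unit [simp]: "X \<in> Ob C \<Longrightarrow> cmp C (mult M X) (Ma M (unit M X)) = idt C (Mo M X)"
  and mult_assoc:
    "X \<in> Ob C \<Longrightarrow> cmp C (mult M X) (mult M (Mo M X)) = cmp C (mult M X) (Ma M (mult M X))"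
  using M unfolding is_monad_def by auto

lemma unit_natural:
  "\<lbrakk>f \<in> Ar C; dom C f = X; cod C f = Y\<rbrakk> \<Longrightarrow> cmp C (Ma M f) (unit M X) = cmp C (unit M Y) f"
  using M unfolding is_monad_def nat_trans_def by auto

lemma mult_natural:
  "\<lbrakk>f \<in> Ar C; dom C f = X; cod C f = Y\<rbrakk>
   \<Longrightarrow> cmp C (mult M Y) (Ma M (Ma M f)) = cmp C (Ma M f) (mult M X)"
  using M unfolding is_monad_def nat_trans_def by auto

lemma mult_unit_cmp [simp]:
  "\<lbrakk>X \<in> Ob C; k \<in> Ar C; cod C k = Mo M X\<rbrakk> \<Longrightarrow> cmp C (mult M X) (cmp C (unit M (Mo M X)) k) = k"
  by (subst cmp_extend[OF mult_unit]) auto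

lemma mult_assoc_cmp:
  "\<lbrakk>X \<in> Ob C; k \<in> Ar C; cod C k = Mo M (Mo M (Mo M X))\<rbrakk>
   \<Longrightarrow> cmp C (mult M X) (cmp C (mult M (Mo M X)) k) = cmp C (mult M X) (cmp C (Ma M (mult M X)) k)"
  by (rule cmp_eq_cmp_extend[OF mult_assoc]) auto

lemma mult_natural_cmp:
  "\<lbrakk>f \<in> Ar C; dom C f = X; cod C f = Y; k \<in> Ar C; cod C k = Mo M (Mo M X)\<rbrakk>
   \<Longrightarrow> cmp C (mult M Y) (cmp C (Ma M (Ma M f)) k) = cmp C (Ma M f) (cmp C (mult M X) k)"
  by (rule cmp_eq_cmp_extend[OF mult_natural]) auto

lemma Ma_cmp_eq_cmp:
  "\<lbrakk>cmp C g f = cmp C g' f'; f \<in> Ar C; g \<in> Ar C; f' \<in> Ar C; g' \<in> Ar C;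
    cod C f = dom C g; cod C f' = dom C g'\<rbrakk>
   \<Longrightarrow> cmp C (Ma M g) (Ma M f) = cmp C (Ma M g') (Ma M f')"
  by (metis Ma_cmp)

lemma Ma_cmp_eq:
  "\<lbrakk>cmp C g f = h; f \<in> Ar C; g \<in> Ar C; cod C f = dom C g\<rbrakk> \<Longrightarrow> cmp C (Ma M g) (Ma M f) = Ma M h"
  by auto

end

end

locale cocartesian_cat = cat +
  assumes coproducts: "has_finite_coproducts C"
begin

lemma coproduct:
  assumes "X \<in> Ob C" "Y \<in> Ob C"
  shows "cp C X Y \<in> Ob C \<and> inl C X Y \<in> hom C X (cp C X Y) \<and> inr C X Y \<in> hom C Y (cp C X Y) \<and>
    (\<forall>Z\<in>Ob C. \<forall>f\<in>hom C X Z. \<forall>g\<in>hom C Y Z.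
       copair C f g \<in> hom C (cp C X Y) Z \<and>
       cmp C (copair C f g) (inl C X Y) = f \<and> cmp C (copair C f g) (inr C X Y) = g \<and>
       (\<forall>h\<in>hom C (cp C X Y) Z. cmp C h (inl C X Y) = f \<and> cmp C h (inr C X Y) = g
          \<longrightarrow> h = copair C f g))"
  using coproducts assms unfolding has_finite_coproducts_def by blast

lemma cp_Ob [simp]: "\<lbrakk>X \<in> Ob C; Y \<in> Ob C\<rbrakk> \<Longrightarrow> cp C X Y \<in> Ob C"
  using coproduct by blast

lemma inl_Ar [simp]: "\<lbrakk>X \<in> Ob C; Y \<in> Ob C\<rbrakk> \<Longrightarrow> inl C X Y \<in> Ar C"
  and dom_inl [simp]: "\<lbrakk>X \<in> Ob C; Y \<in> Ob C\<rbrakk> \<Longrightarrow> dom C (inl C X Y) = X"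
  and cod_inl [simp]: "\<lbrakk>X \<in> Ob C; Y \<in> Ob C\<rbrakk> \<Longrightarrow> cod C (inl C X Y) = cp C X Y"
  and inr_Ar [simp]: "\<lbrakk>X \<in> Ob C; Y \<in> Ob C\<rbrakk> \<Longrightarrow> inr C X Y \<in> Ar C"
  and dom_inr [simp]: "\<lbrakk>X \<in> Ob C; Y \<in> Ob C\<rbrakk> \<Longrightarrow> dom C (inr C X Y) = Y"
  and cod_inr [simp]: "\<lbrakk>X \<in> Ob C; Y \<in> Ob C\<rbrakk> \<Longrightarrow> cod C (inr C X Y) = cp C X Y"
  using coproduct unfolding hom_def by blast+

lemma copair:
  assumes "f \<in> Ar C" "g \<in> Ar C" "cod C f = cod C g"
  shows "copair C f g \<in> hom C (cp C (dom C f) (dom C g)) (cod C f)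
    \<and> cmp C (copair C f g) (inl C (dom C f) (dom C g)) = f
    \<and> cmp C (copair C f g) (inr C (dom C f) (dom C g)) = g"
proof -
  have "f \<in> hom C (dom C f) (cod C f)" "g \<in> hom C (dom C g) (cod C f)"
    using assms unfolding hom_def by auto
  moreover have "dom C f \<in> Ob C" "dom C g \<in> Ob C" "cod C f \<in> Ob C"
    using assms by auto
  ultimately show ?thesis
    using coproduct[of "dom C f" "dom C g"] by blast
qed

lemma copair_Ar [simp]: "\<lbrakk>f \<in> Ar C; g \<in> Ar C; cod C f = cod C g\<rbrakk> \<Longrightarrow> copair C f g \<in> Ar C"
  and dom_copair [simp]:
    "\<lbrakk>f \<in> Ar C; g \<in> Ar C; cod C f = cod C g\<rbrakk> \<Longrightarrow> dom C (copair C f g) = cp C (dom C f) (dom C g)"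
  and cod_copair [simp]: "\<lbrakk>f \<in> Ar C; g \<in> Ar C; cod C f = cod C g\<rbrakk> \<Longrightarrow> cod C (copair C f g) = cod C f"
  using copair unfolding hom_def by blast+

lemma copair_inl [simp]:
  "\<lbrakk>f \<in> Ar C; g \<in> Ar C; cod C f = cod C g; dom C f = X; dom C g = Y\<rbrakk>
   \<Longrightarrow> cmp C (copair C f g) (inl C X Y) = f"
  and copair_inr [simp]:
  "\<lbrakk>f \<in> Ar C; g \<in> Ar C; cod C f = cod C g; dom C f = X; dom C g = Y\<rbrakk>
   \<Longrightarrow> cmp C (copair C f g) (inr C X Y) = g"
  using copair by blast+

lemma copair_inl_cmp [simp]:
  "\<lbrakk>f \<in> Ar C; g \<in> Ar C; cod C f = cod C g; dom C f = X; dom C g = Y; k \<in> Ar C; cod C k = X\<rbrakk>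
   \<Longrightarrow> cmp C (copair C f g) (cmp C (inl C X Y) k) = cmp C f k"
  by (rule cmp_extend[OF copair_inl]) auto

lemma copair_inr_cmp [simp]:
  "\<lbrakk>f \<in> Ar C; g \<in> Ar C; cod C f = cod C g; dom C f = X; dom C g = Y; k \<in> Ar C; cod C k = Y\<rbrakk>
   \<Longrightarrow> cmp C (copair C f g) (cmp C (inr C X Y) k) = cmp C g k"
  by (rule cmp_extend[OF copair_inr]) auto

lemma coproduct_arrow_eqI:
  assumes "h \<in> Ar C" "h' \<in> Ar C" "dom C h = cp C X Y" "dom C h' = cp C X Y" "cod C h = cod C h'"
    and "X \<in> Ob C" "Y \<in> Ob C"
    and "cmp C h (inl C X Y) = cmp C h' (inl C X Y)" "cmp C h (inr C X Y) = cmp C h' (inr C X Y)"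
  shows "h = h'"
proof -
  let ?Z = "cod C h"
  have "cmp C h (inl C X Y) \<in> hom C X ?Z" "cmp C h (inr C X Y) \<in> hom C Y ?Z"
    and "h \<in> hom C (cp C X Y) ?Z" "h' \<in> hom C (cp C X Y) ?Z"
    using assms unfolding hom_def by auto
  then show ?thesis
    using coproduct[OF assms(6,7)] assms(1,8,9) cod_Ob by metis
qed

lemma copair_inl_inr [simp]:
  "\<lbrakk>X \<in> Ob C; Y \<in> Ob C\<rbrakk> \<Longrightarrow> copair C (inl C X Y) (inr C X Y) = idt C (cp C X Y)"
  by (rule coproduct_arrow_eqI[of _ _ X Y]) auto

lemma cmp_copair [simp]:
  assumes "f \<in> Ar C" "g \<in> Ar C" "cod C f = cod C g" "h \<in> Ar C" "dom C h = cod C f"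
  shows "cmp C h (copair C f g) = copair C (cmp C h f) (cmp C h g)"
proof (rule coproduct_arrow_eqI[of _ _ "dom C f" "dom C g"])
  show "cmp C (cmp C h (copair C f g)) (inl C (dom C f) (dom C g))
      = cmp C (copair C (cmp C h f) (cmp C h g)) (inl C (dom C f) (dom C g))"
    using assms by (subst cmp_assoc) auto
  show "cmp C (cmp C h (copair C f g)) (inr C (dom C f) (dom C g))
      = cmp C (copair C (cmp C h f) (cmp C h g)) (inr C (dom C f) (dom C g))"
    using assms by (subst cmp_assoc) auto
qed (use assms in auto)

declare asum_def [simp] semifree_mor_def [simp] sf_delta_def [simp]

lemma semifree_simps [simp]:
  "Mo (semifree C M) X = cp C X (Mo M X)"
  "unit (semifree C M) X = inl C X (Mo M X)"
  "mult (semifree C M) X = copair C (idt C (cp C X (Mo M X)))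
     (cmp C (inr C X (Mo M X)) (cmp C (mult M X) (Ma M (sf_eps C M X))))"
  unfolding semifree_def sf_eps_def by simp_all

lemma sf_eps_semifree [simp]:
  "sf_eps C (semifree C M) X = copair C (inl C X (Mo M X)) (idt C (cp C X (Mo M X)))"
  unfolding sf_eps_def by simp

context
  fixes M
  assumes M [simp]: "is_monad C M"
begin

lemma sf_eps_Ar [simp]: "X \<in> Ob C \<Longrightarrow> sf_eps C M X \<in> Ar C"
  and dom_sf_eps [simp]: "X \<in> Ob C \<Longrightarrow> dom C (sf_eps C M X) = cp C X (Mo M X)"
  and cod_sf_eps [simp]: "X \<in> Ob C \<Longrightarrow> cod C (sf_eps C M X) = Mo M X"
  and sf_eps_inl [simp]: "X \<in> Ob C \<Longrightarrow> cmp C (sf_eps C M X) (inl C X (Mo M X)) = unit M X"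
  and sf_eps_inr [simp]: "X \<in> Ob C \<Longrightarrow> cmp C (sf_eps C M X) (inr C X (Mo M X)) = idt C (Mo M X)"
  and sf_eps_inl_cmp [simp]: "\<lbrakk>X \<in> Ob C; k \<in> Ar C; cod C k = X\<rbrakk>
    \<Longrightarrow> cmp C (sf_eps C M X) (cmp C (inl C X (Mo M X)) k) = cmp C (unit M X) k"
  and sf_eps_inr_cmp [simp]: "\<lbrakk>X \<in> Ob C; k \<in> Ar C; cod C k = Mo M X\<rbrakk>
    \<Longrightarrow> cmp C (sf_eps C M X) (cmp C (inr C X (Mo M X)) k) = k"
  unfolding sf_eps_def by auto

lemma Ma_sf_eps_inl [simp]:
  "X \<in> Ob C \<Longrightarrow> cmp C (Ma M (sf_eps C M X)) (Ma M (inl C X (Mo M X))) = Ma M (unit M X)"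
  by (rule Ma_cmp_eq[OF M sf_eps_inl]) simp_all

lemma Ma_semifree [simp]:
  "f \<in> Ar C \<Longrightarrow> Ma (semifree C M) f = copair C (cmp C (inl C (cod C f) (Mo M (cod C f))) f)
     (cmp C (inr C (cod C f) (Mo M (cod C f))) (Ma M f))"
  unfolding semifree_def by simp

lemma sf_eps_natural:
  "f \<in> Ar C
   \<Longrightarrow> cmp C (sf_eps C M (cod C f)) (Ma (semifree C M) f) = cmp C (Ma M f) (sf_eps C M (dom C f))"
  by (rule coproduct_arrow_eqI[of _ _ "dom C f" "Mo M (dom C f)"])
    (simp_all add: unit_natural)

lemma sf_eps_mult:
  "X \<in> Ob C \<Longrightarrow> cmp C (sf_eps C M X) (mult (semifree C M) X)
     = cmp C (mult M X) (cmp C (Ma M (sf_eps C M X)) (sf_eps C M (cp C X (Mo M X))))"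
  by (rule coproduct_arrow_eqI[of _ _ "cp C X (Mo M X)" "Mo M (cp C X (Mo M X))"])
    (simp_all add: unit_natural)

lemma semifree_mult_natural:
  assumes f: "f \<in> Ar C"
  shows "cmp C (mult (semifree C M) (cod C f)) (Ma (semifree C M) (Ma (semifree C M) f))
       = cmp C (Ma (semifree C M) f) (mult (semifree C M) (dom C f))"
proof -
  have "cmp C (Ma M (sf_eps C M (cod C f))) (Ma M (Ma (semifree C M) f))
      = cmp C (Ma M (Ma M f)) (Ma M (sf_eps C M (dom C f)))"
    by (rule Ma_cmp_eq_cmp[OF M sf_eps_natural]) (simp_all add: f)
  note Ma_sf_eps_natural = this[unfolded Ma_semifree[OF f]]
  show ?thesis
    by (rule coproduct_arrow_eqI[of _ _ "cp C (dom C f) (Mo M (dom C f))"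
          "Mo M (cp C (dom C f) (Mo M (dom C f)))"])
      (simp_all add: f Ma_sf_eps_natural mult_natural_cmp)
qed

lemma is_monad_semifree [simp]: "is_monad C (semifree C M)"
  unfolding is_monad_def
proof (intro conjI ballI)
  show "endofunctor C (Mo (semifree C M)) (Ma (semifree C M))"
    unfolding endofunctor_def hom_def by auto
  show "nat_trans C id id (Mo (semifree C M)) (Ma (semifree C M)) (unit (semifree C M))"
    unfolding nat_trans_def hom_def by auto
  show "nat_trans C (Mo (semifree C M) \<circ> Mo (semifree C M)) (Ma (semifree C M) \<circ> Ma (semifree C M))
      (Mo (semifree C M)) (Ma (semifree C M)) (mult (semifree C M))"
    unfolding nat_trans_def hom_def using semifree_mult_natural by auto
  fix X
  assume X: "X \<in> Ob C"
  then show "cmp C (mult (semifree C M) X) (unit (semifree C M) (Mo (semifree C M) X))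
      = idt C (Mo (semifree C M) X)"
    and "cmp C (mult (semifree C M) X) (Ma (semifree C M) (unit (semifree C M) X))
      = idt C (Mo (semifree C M) X)"
    by simp_all
  have "mult (semifree C M) X \<in> Ar C"
    and "dom C (mult (semifree C M) X) = cp C (cp C X (Mo M X)) (Mo M (cp C X (Mo M X)))"
    and "cod C (mult (semifree C M) X) = cp C X (Mo M X)"
    using X by simp_all
  then have Ma_sf_eps_mult: "cmp C (Ma M (sf_eps C M X)) (Ma M (mult (semifree C M) X))
      = cmp C (Ma M (mult M X))
          (cmp C (Ma M (Ma M (sf_eps C M X))) (Ma M (sf_eps C M (cp C X (Mo M X)))))"
    using arg_cong[OF sf_eps_mult[OF X], of "Ma M"] X by (simp del: semifree_simps)
  show "cmp C (mult (semifree C M) X) (mult (semifree C M) (Mo (semifree C M) X))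
      = cmp C (mult (semifree C M) X) (Ma (semifree C M) (mult (semifree C M) X))"
    by (rule coproduct_arrow_eqI[of _ _ "cp C (cp C X (Mo M X)) (Mo M (cp C X (Mo M X)))"
          "Mo M (cp C (cp C X (Mo M X)) (Mo M (cp C X (Mo M X))))"])
      (simp_all add: X Ma_sf_eps_mult[unfolded semifree_simps] mult_natural_cmp[symmetric]
        mult_assoc_cmp)
qed

lemma monad_mor_sf_eps: "monad_mor C (semifree C M) M (sf_eps C M)"
  unfolding monad_mor_def nat_trans_def hom_def
  using sf_eps_natural sf_eps_mult by simp

end

context
  fixes M
  assumes M [simp]: "is_monad C M"
begin

lemma sf_eps_semifree_sf_delta:
  "X \<in> Ob C \<Longrightarrow> cmp C (sf_eps C (semifree C M) X) (sf_delta C M X) = idt C (cp C X (Mo M X))"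
  by (rule coproduct_arrow_eqI[of _ _ X "Mo M X"]) simp_all

lemma monad_mor_sf_delta: "monad_mor C (semifree C M) (semifree C (semifree C M)) (sf_delta C M)"
  unfolding monad_mor_def nat_trans_def
proof (intro conjI ballI)
  fix f
  assume f: "f \<in> Ar C"
  show "cmp C (sf_delta C M (cod C f)) (Ma (semifree C M) f)
      = cmp C (Ma (semifree C (semifree C M)) f) (sf_delta C M (dom C f))"
    by (rule coproduct_arrow_eqI[of _ _ "dom C f" "Mo M (dom C f)"]) (simp_all add: f)
next
  fix X
  assume X: "X \<in> Ob C"
  then show "sf_delta C M X \<in> hom C (Mo (semifree C M) X) (Mo (semifree C (semifree C M)) X)"
    and "cmp C (sf_delta C M X) (unit (semifree C M) X) = unit (semifree C (semifree C M)) X"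
    unfolding hom_def by simp_all
  have Ma_sf_eps_semifree_sf_delta:
    "cmp C (Ma M (copair C (inl C X (Mo M X)) (idt C (cp C X (Mo M X)))))
       (Ma M (copair C (inl C X (cp C X (Mo M X)))
          (cmp C (inr C X (cp C X (Mo M X))) (inr C X (Mo M X)))))
     = Ma M (idt C (cp C X (Mo M X)))"
    by (rule Ma_cmp_eq[OF M]) (use X sf_eps_semifree_sf_delta[OF X] in simp_all)
  show "cmp C (sf_delta C M X) (mult (semifree C M) X)
      = cmp C (mult (semifree C (semifree C M)) X)
          (cmp C (Ma (semifree C (semifree C M)) (sf_delta C M X))
            (sf_delta C M (Mo (semifree C M) X)))"
    by (rule coproduct_arrow_eqI[of _ _ "cp C X (Mo M X)" "Mo M (cp C X (Mo M X))"])
      (simp_all add: X Ma_sf_eps_semifree_sf_delta)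
qed

lemma semifree_counit_left:
  "mor_eq C (mon_comp C (sf_eps C (semifree C M)) (sf_delta C M)) (mon_id C (semifree C M))"
  unfolding mor_eq_def mon_comp_def mon_id_def using sf_eps_semifree_sf_delta by simp

lemma semifree_counit_right:
  "mor_eq C (mon_comp C (semifree_mor C (sf_eps C M)) (sf_delta C M)) (mon_id C (semifree C M))"
  unfolding mor_eq_def mon_comp_def mon_id_def
proof
  fix X
  assume X: "X \<in> Ob C"
  show "cmp C (semifree_mor C (sf_eps C M) X) (sf_delta C M X) = idt C (Mo (semifree C M) X)"
    by (rule coproduct_arrow_eqI[of _ _ X "Mo M X"]) (simp_all add: X)
qed

lemma semifree_coassoc:
  "mor_eq C (mon_comp C (sf_delta C (semifree C M)) (sf_delta C M))
     (mon_comp C (semifree_mor C (sf_delta C M)) (sf_delta C M))"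
  unfolding mor_eq_def mon_comp_def
proof
  fix X
  assume X: "X \<in> Ob C"
  show "cmp C (sf_delta C (semifree C M) X) (sf_delta C M X)
      = cmp C (semifree_mor C (sf_delta C M) X) (sf_delta C M X)"
    by (rule coproduct_arrow_eqI[of _ _ X "Mo M X"]) (simp_all add: X)
qed

end

context
  fixes M T \<sigma>
  assumes M [simp]: "is_monad C M" and T [simp]: "is_monad C T"
    and mor: "monad_mor C M T \<sigma>"
begin

lemma mor_simps [simp]:
  "X \<in> Ob C \<Longrightarrow> \<sigma> X \<in> Ar C"
  "X \<in> Ob C \<Longrightarrow> dom C (\<sigma> X) = Mo M X"
  "X \<in> Ob C \<Longrightarrow> cod C (\<sigma> X) = Mo T X"
  "X \<in> Ob C \<Longrightarrow> cmp C (\<sigma> X) (unit M X) = unit T X"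
  using mor unfolding monad_mor_def nat_trans_def hom_def by auto

lemma mor_natural:
  "\<lbrakk>f \<in> Ar C; dom C f = X; cod C f = Y\<rbrakk> \<Longrightarrow> cmp C (\<sigma> Y) (Ma M f) = cmp C (Ma T f) (\<sigma> X)"
  using mor unfolding monad_mor_def nat_trans_def by auto

lemma mor_mult:
  "X \<in> Ob C \<Longrightarrow> cmp C (\<sigma> X) (mult M X) = cmp C (mult T X) (cmp C (Ma T (\<sigma> X)) (\<sigma> (Mo M X)))"
  using mor unfolding monad_mor_def by auto

lemma mor_natural_cmp:
  "\<lbrakk>f \<in> Ar C; dom C f = X; cod C f = Y; k \<in> Ar C; cod C k = Mo M X\<rbrakk>
   \<Longrightarrow> cmp C (\<sigma> Y) (cmp C (Ma M f) k) = cmp C (Ma T f) (cmp C (\<sigma> X) k)"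
  by (rule cmp_eq_cmp_extend[OF mor_natural]) auto

lemma mor_mult_cmp:
  "\<lbrakk>X \<in> Ob C; k \<in> Ar C; cod C k = Mo M (Mo M X)\<rbrakk>
   \<Longrightarrow> cmp C (\<sigma> X) (cmp C (mult M X) k)
     = cmp C (mult T X) (cmp C (Ma T (\<sigma> X)) (cmp C (\<sigma> (Mo M X)) k))"
  by (subst cmp_extend[OF mor_mult]) auto

lemma sf_eps_semifree_mor:
  "X \<in> Ob C \<Longrightarrow> cmp C (sf_eps C T X) (semifree_mor C \<sigma> X) = cmp C (\<sigma> X) (sf_eps C M X)"
  by (rule coproduct_arrow_eqI[of _ _ X "Mo M X"]) simp_all

lemma monad_mor_semifree_mor: "monad_mor C (semifree C M) (semifree C T) (semifree_mor C \<sigma>)"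
  unfolding monad_mor_def nat_trans_def
proof (intro conjI ballI)
  fix f
  assume f: "f \<in> Ar C"
  show "cmp C (semifree_mor C \<sigma> (cod C f)) (Ma (semifree C M) f)
      = cmp C (Ma (semifree C T) f) (semifree_mor C \<sigma> (dom C f))"
    by (rule coproduct_arrow_eqI[of _ _ "dom C f" "Mo M (dom C f)"])
      (simp_all add: f mor_natural mor_natural_cmp)
next
  fix X
  assume X: "X \<in> Ob C"
  then show "semifree_mor C \<sigma> X \<in> hom C (Mo (semifree C M) X) (Mo (semifree C T) X)"
    and "cmp C (semifree_mor C \<sigma> X) (unit (semifree C M) X) = unit (semifree C T) X"
    unfolding hom_def by simp_all
  have Ma_sf_eps_semifree_mor:
    "cmp C (Ma T (sf_eps C T X))
       (Ma T (copair C (inl C X (Mo T X)) (cmp C (inr C X (Mo T X)) (\<sigma> X))))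
     = cmp C (Ma T (\<sigma> X)) (Ma T (sf_eps C M X))"
    by (rule Ma_cmp_eq_cmp[OF T]) (use X sf_eps_semifree_mor[OF X] in simp_all)
  show "cmp C (semifree_mor C \<sigma> X) (mult (semifree C M) X)
      = cmp C (mult (semifree C T) X)
          (cmp C (Ma (semifree C T) (semifree_mor C \<sigma> X)) (semifree_mor C \<sigma> (Mo (semifree C M) X)))"
    by (rule coproduct_arrow_eqI[of _ _ "cp C X (Mo M X)" "Mo M (cp C X (Mo M X))"])
      (simp_all add: X mor_mult_cmp mor_natural mor_natural_cmp
        cmp_eq_cmp_extend[OF Ma_sf_eps_semifree_mor])
qed

lemma sf_eps_mor_natural:
  "mor_eq C (mon_comp C \<sigma> (sf_eps C M)) (mon_comp C (sf_eps C T) (semifree_mor C \<sigma>))"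
  unfolding mor_eq_def mon_comp_def using sf_eps_semifree_mor by simp

lemma sf_delta_mor_natural:
  "mor_eq C (mon_comp C (semifree_mor C (semifree_mor C \<sigma>)) (sf_delta C M))
     (mon_comp C (sf_delta C T) (semifree_mor C \<sigma>))"
  unfolding mor_eq_def mon_comp_def
proof
  fix X
  assume X: "X \<in> Ob C"
  show "cmp C (semifree_mor C (semifree_mor C \<sigma>) X) (sf_delta C M X)
      = cmp C (sf_delta C T X) (semifree_mor C \<sigma> X)"
    by (rule coproduct_arrow_eqI[of _ _ X "Mo M X"]) (simp_all add: X)
qed

end

lemma mon_endofunctor_semifree: "mon_endofunctor C (semifree C) (semifree_mor C)"
  unfolding mon_endofunctor_def
proof (intro conjI allI impI)
  fix M T \<sigma>
  assume "is_monad C M" "is_monad C T" "monad_mor C M T \<sigma>"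
  then show "monad_mor C (semifree C M) (semifree C T) (semifree_mor C \<sigma>)"
    by (rule monad_mor_semifree_mor)
next
  fix M T U \<sigma> \<tau>
  assume M: "is_monad C M" and T: "is_monad C T" and U: "is_monad C U"
    and \<sigma>: "monad_mor C M T \<sigma>" and \<tau>: "monad_mor C T U \<tau>"
  show "mor_eq C (semifree_mor C (mon_comp C \<tau> \<sigma>))
      (mon_comp C (semifree_mor C \<tau>) (semifree_mor C \<sigma>))"
    unfolding mor_eq_def mon_comp_def
  proof
    fix X
    assume X: "X \<in> Ob C"
    show "semifree_mor C (\<lambda>X. cmp C (\<tau> X) (\<sigma> X)) X
        = cmp C (semifree_mor C \<tau> X) (semifree_mor C \<sigma> X)"
      by (rule coproduct_arrow_eqI[of _ _ X "Mo M X"])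
        (simp_all add: X M T U mor_simps[OF M T \<sigma>] mor_simps[OF T U \<tau>])
  qed
qed (simp_all add: mor_eq_def mon_id_def)

theorem mon_comonad_semifree: "mon_comonad C (semifree C) (semifree_mor C) (sf_eps C) (sf_delta C)"
  unfolding mon_comonad_def
  using mon_endofunctor_semifree monad_mor_sf_eps monad_mor_sf_delta
    sf_eps_mor_natural sf_delta_mor_natural
    semifree_counit_left semifree_counit_right semifree_coassoc
  by blast

end

theorem lemma19:
  assumes "category C" and "has_finite_coproducts C"
  shows "mon_comonad C (semifree C) (semifree_mor C) (sf_eps C) (sf_delta C)"
proof -
  interpret cocartesian_cat C
    by unfold_locales (fact assms)+
  show ?thesis
    by (rule mon_comonad_semifree)
qed

end
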